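(* Let $\mathbb{T}$ be a time scale, $a<b$ in $\mathbb{T}$, and let $d,f$ be continuous functions on $[a,b]_{\mathbb{T}}$ such that $1+\mu(t)d(t)\neq 0$ for all $t\in[a,b]_{\mathbb{T}}$ and $$\sup_{t\in[a,b]_{\mathbb{T}}}|e_d(t,a)|\int_a^t|e_d(a,\sigma(s))|\,\Delta s<\infty.$$ Then the first-order dynamic equation $$x^{\Delta}(t)-d(t)x(t)-f(t)=0,\quad t\in[a,b]_{\mathbb{T}},$$ has Hyers–Ulam stability: for every $\varepsilon>0$, whenever $g\in C^1_{rd}([a,b]_{\mathbb{T}})$ satisfies $|g^{\Delta}(t)-d(t)g(t)-f(t)|\le\varepsilon$ for all $t\in[a,b]_{\mathbb{T}}$, there exists a solution $w\in C^1_{rd}([a,b]_{\mathbb{T}})$ of $w^\Delta-dw-f=0$ on $[a,b]_{\mathbb{T}}$ such that $|g(t)-w(t)|\le L\varepsilon$ for all $t\in[a,b]_{\mathbb{T}}$, for some constant $L>0$.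
   Context: A time scale $\mathbb{T}$ is a nonempty closed subset of $\mathbb{R}$; $[a,b]_{\mathbb{T}}:=[a,b]\cap\mathbb{T}$. $\sigma(t)=\inf\{s\in\mathbb{T}:s>t\}$ is the forward jump operator, $\mu(t)=\sigma(t)-t$ the graininess, $f^\Delta$ the delta derivative, and $\int\cdots\Delta s$ the delta integral. $C^1_{rd}([a,b]_{\mathbb{T}})$ denotes delta differentiable functions with rd-continuous delta derivative. For a regressive rd-continuous function $d$ (i.e. $1+\mu d\neq0$), $e_d(t,s)$ denotes the time-scale exponential function, the unique solution of $x^\Delta=d(t)x$, $x(s)=1$. *)

theory Defs
  imports "HOL-Analysis.Analysis"
begin

definition time_scale :: "real set \<Rightarrow> bool" where
  "time_scale T \<longleftrightarrow> closed T \<and> T \<noteq> {}"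

definition sigma :: "real set \<Rightarrow> real \<Rightarrow> real" where
  "sigma T t = (if \<exists>s\<in>T. s > t then Inf {s\<in>T. s > t} else t)"

definition mu :: "real set \<Rightarrow> real \<Rightarrow> real" where
  "mu T t = sigma T t - t"

text \<open>Delta derivative (Hilger / Bohner--Peterson definition) at a point t of T.\<close>
definition has_delta_derivative :: "real set \<Rightarrow> (real \<Rightarrow> real) \<Rightarrow> real \<Rightarrow> real \<Rightarrow> bool" where
  "has_delta_derivative T f D t \<longleftrightarrow> t \<in> T \<and>
     (\<forall>e>0. \<exists>\<delta>>0. \<forall>s\<in>T. \<bar>s - t\<bar> < \<delta> \<longrightarrow>
        \<bar>f (sigma T t) - f s - D * (sigma T t - s)\<bar> \<le> e * \<bar>sigma T t - s\<bar>)"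

definition rd_continuous_on :: "real set \<Rightarrow> real set \<Rightarrow> (real \<Rightarrow> real) \<Rightarrow> bool" where
  "rd_continuous_on T S h \<longleftrightarrow> (\<forall>t\<in>S.
     ((sigma T t = t \<and> (\<exists>s\<in>T. s > t)) \<longrightarrow> continuous (at t within S) h) \<and>
     (\<exists>L. (h \<longlongrightarrow> L) (at t within (S \<inter> {..<t}))))"

definition delta_integral :: "real set \<Rightarrow> (real \<Rightarrow> real) \<Rightarrow> real \<Rightarrow> real \<Rightarrow> real" where
  "delta_integral T h r t = (THE I. \<exists>F. continuous_on ({r..t} \<inter> T) F \<and>
      (\<forall>\<tau>\<in>{r..<t} \<inter> T. has_delta_derivative T F (h \<tau>) \<tau>) \<and> I = F t - F r)"

text \<open>Time-scale exponential e_d(t,s) for t, s in [a,b]_T: the value at t of the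
  unique solution of x^Delta = d x on [a,b]_T with x(s) = 1.\<close>
definition texp :: "real set \<Rightarrow> real \<Rightarrow> real \<Rightarrow> (real \<Rightarrow> real) \<Rightarrow> real \<Rightarrow> real \<Rightarrow> real" where
  "texp T a b d t s = (THE v. \<exists>x. x s = 1 \<and> continuous_on ({a..b} \<inter> T) x \<and>
      (\<forall>r\<in>{a..<b} \<inter> T. has_delta_derivative T x (d r * x r) r) \<and> v = x t)"

end

theory Submission
  imports Defs
begin

(*
  Let D > max |d| on [a,b]_T. If g has defect at most \<epsilon>, compare it with the solution y of
  the equation with y(a) = g(a). Such a solution exists by Banach's fixed point theorem: the
  equation is equivalent to a Volterra integral equation, which is a contraction for a
  Bielecki-weighted sup norm. The difference z = g - y satisfies |z^\<Delta>| \<le> D |z| + \<epsilon> and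
  z(a) = 0, and a Gronwall inequality proved by induction over the time scale gives
  |z(t)| \<le> 2\<epsilon>/D (exp (D (t - a)) - 1). Hence L = 2 exp (D (b - a)) / D works.
*)

section \<open>Forward jump operator and delta derivatives\<close>

lemma le_sigma: "t \<le> sigma T t"
proof (cases "\<exists>s\<in>T. s > t")
  case True
  then show ?thesis unfolding sigma_def by (auto intro!: cInf_greatest)
qed (simp add: sigma_def)

lemma sigma_le: assumes "s \<in> T" "t < s" shows "sigma T t \<le> s"
proof -
  have "bdd_below {s\<in>T. s > t}" by (rule bdd_belowI[of _ t]) auto
  then show ?thesis using assms unfolding sigma_def by (auto intro!: cInf_lower)
qed

lemma sigma_in: assumes "closed T" "t \<in> T" shows "sigma T t \<in> T"
proof (cases "\<exists>s\<in>T. s > t")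
  case True
  have "Inf {s\<in>T. s > t} \<in> closure {s\<in>T. s > t}"
    using True by (intro closure_contains_Inf bdd_belowI[of _ t]) auto
  also have "\<dots> \<subseteq> T" using assms(1) closure_minimal[of "{s\<in>T. s > t}" T] by auto
  finally show ?thesis using True by (simp add: sigma_def)
qed (use assms in \<open>simp add: sigma_def\<close>)

lemma right_dense_imp_points_above:
  assumes "sigma T t = t" "s \<in> T" "t < s" "\<delta> > 0"
  shows "\<exists>r\<in>T. t < r \<and> r < t + \<delta>"
proof -
  have ne: "{s\<in>T. s > t} \<noteq> {}" and bdd: "bdd_below {s\<in>T. s > t}"
    using assms by (auto intro: bdd_belowI[of _ t])
  have "Inf {s\<in>T. s > t} < t + \<delta>"
    using assms unfolding sigma_def by (auto split: if_splits)
  then show ?thesis using cInf_less_iff[OF ne bdd] by auto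
qed

lemma has_delta_derivative_sigma:
  assumes "has_delta_derivative T z D t"
  shows "z (sigma T t) = z t + mu T t * D"
proof -
  define c where "c = \<bar>sigma T t - t\<bar>"
  have "\<bar>z (sigma T t) - z t - D * (sigma T t - t)\<bar> \<le> e" if "e > 0" for e
  proof -
    have "e / (c + 1) > 0" using \<open>e > 0\<close> by (simp add: c_def add_nonneg_pos)
    then obtain \<delta> where "\<delta> > 0" "\<forall>s\<in>T. \<bar>s - t\<bar> < \<delta> \<longrightarrow>
        \<bar>z (sigma T t) - z s - D * (sigma T t - s)\<bar> \<le> e / (c + 1) * \<bar>sigma T t - s\<bar>"
      using assms unfolding has_delta_derivative_def by blast
    then have "\<bar>z (sigma T t) - z t - D * (sigma T t - t)\<bar> \<le> e / (c + 1) * c"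
      using assms by (auto simp: has_delta_derivative_def c_def)
    also have "\<dots> \<le> e" using \<open>e > 0\<close> by (simp add: c_def field_simps)
    finally show ?thesis .
  qed
  then have "\<bar>z (sigma T t) - z t - D * (sigma T t - t)\<bar> \<le> 0"
    by (metis field_le_epsilon add_0)
  then show ?thesis by (simp add: mu_def algebra_simps)
qed

lemma has_delta_derivative_imp_continuous_within:
  assumes "has_delta_derivative T z D t"
  shows "continuous (at t within T) z"
  unfolding continuous_within_eps_delta
proof (intro allI impI)
  fix \<epsilon> :: real assume "\<epsilon> > 0"
  have "t \<in> T" using assms by (simp add: has_delta_derivative_def)
  define m where "m = sigma T t - t"
  have "m \<ge> 0" using le_sigma[of t T] by (simp add: m_def)
  define e where "e = \<epsilon> / (4 * (m + 1))"
  have "e > 0" using \<open>\<epsilon> > 0\<close> \<open>m \<ge> 0\<close> by (simp add: e_def)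
  have "e * (m + 1) = \<epsilon> / 4"
    using \<open>m \<ge> 0\<close> by (simp add: e_def field_simps add_nonneg_eq_0_iff)
  obtain \<delta>1 where "\<delta>1 > 0" and \<delta>1: "\<forall>s\<in>T. \<bar>s - t\<bar> < \<delta>1 \<longrightarrow>
      \<bar>z (sigma T t) - z s - D * (sigma T t - s)\<bar> \<le> e * \<bar>sigma T t - s\<bar>"
    using assms \<open>e > 0\<close> unfolding has_delta_derivative_def by blast
  define \<delta> where "\<delta> = min \<delta>1 (min 1 (\<epsilon> / (2 * (\<bar>D\<bar> + 1))))"
  have "dist (z s) (z t) < \<epsilon>" if "s \<in> T" "dist s t < \<delta>" for s
  proof -
    have st: "\<bar>s - t\<bar> < \<delta>" using that by (simp add: dist_real_def)
    have small: "e * \<bar>sigma T t - r\<bar> \<le> \<epsilon> / 4" if "\<bar>sigma T t - r\<bar> \<le> m + 1" for r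
      using that \<open>e > 0\<close> \<open>e * (m + 1) = \<epsilon> / 4\<close> by (metis mult_left_mono less_imp_le)
    have "e * \<bar>sigma T t - s\<bar> \<le> \<epsilon> / 4"
      using st \<open>m \<ge> 0\<close> by (intro small) (auto simp: m_def \<delta>_def)
    moreover have "e * \<bar>sigma T t - t\<bar> \<le> \<epsilon> / 4"
      using \<open>m \<ge> 0\<close> by (intro small) (simp add: m_def)
    moreover have "\<bar>D\<bar> * \<bar>s - t\<bar> \<le> \<bar>D\<bar> * (\<epsilon> / (2 * (\<bar>D\<bar> + 1)))"
      using st by (intro mult_left_mono) (auto simp: \<delta>_def)
    moreover have "\<bar>D\<bar> * (\<epsilon> / (2 * (\<bar>D\<bar> + 1))) < \<epsilon> / 2"
      using \<open>\<epsilon> > 0\<close> by (simp add: field_simps)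
    moreover have "\<bar>z s - z t\<bar> \<le> \<bar>z (sigma T t) - z s - D * (sigma T t - s)\<bar>
        + \<bar>z (sigma T t) - z t - D * (sigma T t - t)\<bar> + \<bar>D\<bar> * \<bar>s - t\<bar>"
      by (simp add: abs_mult[symmetric] algebra_simps)
    moreover have "\<bar>z (sigma T t) - z s - D * (sigma T t - s)\<bar> \<le> e * \<bar>sigma T t - s\<bar>"
      using \<delta>1 that st by (simp add: \<delta>_def)
    moreover have "\<bar>z (sigma T t) - z t - D * (sigma T t - t)\<bar> \<le> e * \<bar>sigma T t - t\<bar>"
      using \<delta>1 \<open>t \<in> T\<close> \<open>\<delta>1 > 0\<close> by simp
    ultimately show ?thesis by (simp add: dist_real_def)
  qed
  moreover have "\<delta> > 0" using \<open>\<delta>1 > 0\<close> \<open>\<epsilon> > 0\<close> by (simp add: \<delta>_def)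
  ultimately show "\<exists>\<delta>>0. \<forall>s\<in>T. dist s t < \<delta> \<longrightarrow> dist (z s) (z t) < \<epsilon>" by blast
qed

lemma has_delta_derivative_imp_continuous_on:
  assumes "\<And>t. t \<in> S \<Longrightarrow> has_delta_derivative T z (\<zeta> t) t"
  shows "continuous_on S z"
proof -
  have "S \<subseteq> T" using assms by (auto simp: has_delta_derivative_def)
  then show ?thesis
    unfolding continuous_on_eq_continuous_within
    using assms has_delta_derivative_imp_continuous_within continuous_within_subset by blast
qed

lemma has_delta_derivative_diff:
  assumes "has_delta_derivative T f D t" "has_delta_derivative T g E t"
  shows "has_delta_derivative T (\<lambda>x. f x - g x) (D - E) t"
  unfolding has_delta_derivative_def
proof (intro conjI allI impI)
  show "t \<in> T" using assms by (simp add: has_delta_derivative_def)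
  fix e :: real assume "e > 0"
  obtain d1 where d1: "d1 > 0" "\<forall>s\<in>T. \<bar>s - t\<bar> < d1 \<longrightarrow>
        \<bar>f (sigma T t) - f s - D * (sigma T t - s)\<bar> \<le> e / 2 * \<bar>sigma T t - s\<bar>"
    using assms(1) \<open>e > 0\<close> unfolding has_delta_derivative_def by (meson half_gt_zero)
  obtain d2 where d2: "d2 > 0" "\<forall>s\<in>T. \<bar>s - t\<bar> < d2 \<longrightarrow>
        \<bar>g (sigma T t) - g s - E * (sigma T t - s)\<bar> \<le> e / 2 * \<bar>sigma T t - s\<bar>"
    using assms(2) \<open>e > 0\<close> unfolding has_delta_derivative_def by (meson half_gt_zero)
  show "\<exists>\<delta>>0. \<forall>s\<in>T. \<bar>s - t\<bar> < \<delta> \<longrightarrow>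
      \<bar>f (sigma T t) - g (sigma T t) - (f s - g s) - (D - E) * (sigma T t - s)\<bar> \<le> e * \<bar>sigma T t - s\<bar>"
  proof (intro exI[of _ "min d1 d2"] conjI ballI impI)
    show "min d1 d2 > 0" using d1 d2 by simp
    fix s assume "s \<in> T" "\<bar>s - t\<bar> < min d1 d2"
    then have "\<bar>f (sigma T t) - f s - D * (sigma T t - s)\<bar> \<le> e / 2 * \<bar>sigma T t - s\<bar>"
      and "\<bar>g (sigma T t) - g s - E * (sigma T t - s)\<bar> \<le> e / 2 * \<bar>sigma T t - s\<bar>"
      using d1 d2 by auto
    moreover have "\<bar>f (sigma T t) - g (sigma T t) - (f s - g s) - (D - E) * (sigma T t - s)\<bar>
       \<le> \<bar>f (sigma T t) - f s - D * (sigma T t - s)\<bar> + \<bar>g (sigma T t) - g s - E * (sigma T t - s)\<bar>"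
      by (simp add: algebra_simps)
    ultimately show "\<bar>f (sigma T t) - g (sigma T t) - (f s - g s) - (D - E) * (sigma T t - s)\<bar>
        \<le> e * \<bar>sigma T t - s\<bar>" by linarith
  qed
qed

lemma continuous_on_imp_rd_continuous_on:
  assumes "continuous_on S h" shows "rd_continuous_on T S h"
  unfolding rd_continuous_on_def
proof (intro ballI conjI impI)
  fix t assume "t \<in> S"
  then show "continuous (at t within S) h" using assms continuous_on_eq_continuous_within by blast
  then have "(h \<longlongrightarrow> h t) (at t within S \<inter> {..<t})"
    by (simp add: continuous_within) (rule tendsto_within_subset, auto)
  then show "\<exists>L. (h \<longlongrightarrow> L) (at t within S \<inter> {..<t})" by blast
qed

locale time_scale_interval =
  fixes T :: "real set" and a b :: real
  assumes closed_T: "closed T" and a_in_T: "a \<in> T" and b_in_T: "b \<in> T" and a_less_b: "a < b"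
begin

abbreviation K :: "real set" where "K \<equiv> {a..b} \<inter> T"

lemma closed_K: "closed K"
  using closed_T by (intro closed_Int) auto

lemma compact_K: "compact K"
  using closed_K by (simp add: compact_eq_bounded_closed bounded_Int)

lemma a_in_K: "a \<in> K"
  using a_in_T a_less_b by auto

lemma sigma_in_K: assumes "t \<in> K" "t < b" shows "sigma T t \<in> K"
  using assms sigma_in[OF closed_T, of t] sigma_le[OF b_in_T, of t] le_sigma[of t T] by auto

section \<open>Delta antiderivatives of continuous functions\<close>

text \<open>Composing with floor_K extends a function on K to a step function on the reals that is
  constant across the gaps of K; the indefinite integral of such an extension is a delta
  antiderivative.\<close>
definition floor_K :: "real \<Rightarrow> real" where
  "floor_K u = (if u \<le> a then a else Sup {r\<in>K. r \<le> u})"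

lemma floor_K_in_K: "floor_K u \<in> K"
proof (cases "u \<le> a")
  case False
  have "{r\<in>K. r \<le> u} = K \<inter> {..u}" by auto
  then have "closed {r\<in>K. r \<le> u}" using closed_Int[OF closed_K closed_atMost] by simp
  then have "Sup {r\<in>K. r \<le> u} \<in> {r\<in>K. r \<le> u}"
    using a_in_K False by (intro closed_contains_Sup bdd_aboveI[of _ u]) force+
  then show ?thesis using False by (simp add: floor_K_def)
qed (use a_in_K in \<open>simp add: floor_K_def\<close>)

lemma floor_K_le: "floor_K u \<le> max a u"
  using a_in_K by (auto simp: floor_K_def intro!: cSup_least)

lemma le_floor_K: assumes "r \<in> K" "r \<le> u" shows "r \<le> floor_K u"
  using assms unfolding floor_K_def by (auto intro!: cSup_upper bdd_aboveI[of _ u])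

lemma floor_K_le_point:
  assumes "t \<in> K" "\<And>r. r \<in> K \<Longrightarrow> r \<le> u \<Longrightarrow> r \<le> t" shows "floor_K u \<le> t"
  using assms a_in_K unfolding floor_K_def by (auto intro!: cSup_least)

lemma mono_floor_K: "mono floor_K"
proof (rule monoI)
  fix u v :: real assume "u \<le> v"
  show "floor_K u \<le> floor_K v"
  proof (cases "u \<le> a")
    case True
    then show ?thesis using floor_K_in_K[of v] by (simp add: floor_K_def)
  next
    case False
    then show ?thesis using floor_K_in_K[of u] floor_K_le[of u] \<open>u \<le> v\<close> by (intro le_floor_K) auto
  qed
qed

lemma floor_K_between:
  assumes t: "t \<in> K" and s: "s \<in> T"
    and u: "min s (sigma T t) < u" "u < max s (sigma T t)"
  shows "\<bar>floor_K u - t\<bar> \<le> \<bar>s - t\<bar>"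
proof (cases "s \<le> t")
  case True
  then have u': "s < u" "u < sigma T t" using u le_sigma[of t T] by auto
  have "floor_K u \<le> t"
  proof (rule floor_K_le_point[OF t])
    fix r assume "r \<in> K" "r \<le> u"
    show "r \<le> t"
    proof (rule ccontr)
      assume "\<not> r \<le> t"
      then have "sigma T t \<le> r" using \<open>r \<in> K\<close> by (intro sigma_le) auto
      then show False using u' \<open>r \<le> u\<close> by linarith
    qed
  qed
  moreover have "s \<le> floor_K u"
  proof (cases "a \<le> s")
    case True
    then show ?thesis using s t \<open>s \<le> t\<close> u' by (intro le_floor_K) auto
  next
    case False
    then show ?thesis using floor_K_in_K[of u] by auto
  qed
  ultimately show ?thesis using True by linarith
next
  case False
  then have u': "sigma T t < u" "u < s" using u s sigma_le[of s T t] by auto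
  then have "t < u" using le_sigma[of t T] by linarith
  then have "t \<le> floor_K u" using t by (intro le_floor_K) auto
  moreover have "floor_K u \<le> u" using floor_K_le[of u] t \<open>t < u\<close> by auto
  ultimately show ?thesis using u' False by linarith
qed

lemma integrable_floor_K:
  fixes G :: "real \<Rightarrow> real"
  assumes "continuous_on K G"
  shows "(\<lambda>u. G (floor_K u)) integrable_on {\<alpha>..\<beta>}"
proof -
  obtain G' where G': "continuous_on UNIV G'" "\<And>x. x \<in> K \<Longrightarrow> G' x = G x"
    using Tietze_unbounded[OF assms, of UNIV] closed_K by auto
  have eq: "(\<lambda>u. G (floor_K u)) = (\<lambda>u. G' (floor_K u))" using G'(2) floor_K_in_K by auto
  obtain B where "\<forall>x\<in>G ` K. norm x \<le> B"
    using compact_imp_bounded[OF compact_continuous_image[OF assms compact_K]]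
    unfolding bounded_iff by blast
  then have B: "\<And>r. r \<in> K \<Longrightarrow> norm (G r) \<le> B" by blast
  have "floor_K \<in> borel_measurable borel" using mono_floor_K borel_measurable_mono by blast
  moreover have "G' \<in> borel_measurable borel" using G' borel_measurable_continuous_onI by blast
  ultimately have "(\<lambda>u. G' (floor_K u)) \<in> borel_measurable borel"
    by (metis (no_types) measurable_compose)
  then have "(\<lambda>u. G' (floor_K u)) \<in> borel_measurable (lebesgue_on {\<alpha>..\<beta>})"
    by (simp add: measurable_completion measurable_restrict_space1)
  then have "(\<lambda>u. G' (floor_K u)) integrable_on {\<alpha>..\<beta>}"
    by (rule measurable_bounded_by_integrable_imp_integrable[of _ _ "\<lambda>_. B"])
      (use B G'(2) floor_K_in_K in auto)
  then show ?thesis using eq by simp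
qed

lemma integral_floor_K_increment:
  fixes G :: "real \<Rightarrow> real"
  assumes G: "continuous_on K G" and t: "t \<in> K" and s: "s \<in> T" "a - 1 \<le> s"
    and close: "\<And>r. r \<in> K \<Longrightarrow> \<bar>r - t\<bar> \<le> \<bar>s - t\<bar> \<Longrightarrow> \<bar>G r - G t\<bar> \<le> e"
  shows "\<bar>integral {a-1..sigma T t} (\<lambda>u. G (floor_K u)) - integral {a-1..s} (\<lambda>u. G (floor_K u))
          - G t * (sigma T t - s)\<bar> \<le> e * \<bar>sigma T t - s\<bar>"
proof -
  define F where "F = (\<lambda>u. G (floor_K u))"
  define p where "p = min s (sigma T t)"
  define q where "q = max s (sigma T t)"
  have pq: "a - 1 \<le> p" "p \<le> q" using s t le_sigma[of t T] by (auto simp: p_def q_def)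
  have "integral {a-1..p} F + integral {p..q} F = integral {a-1..q} F"
    using Henstock_Kurzweil_Integration.integral_combine[where a="a-1" and c=p and b=q and f=F] pq integrable_floor_K[OF G]
    by (simp add: F_def)
  then have increment: "integral {a-1..sigma T t} F - integral {a-1..s} F - G t * (sigma T t - s)
      = (if s \<le> sigma T t then 1 else -1) * (integral {p..q} F - (q - p) * G t)"
    by (auto simp: p_def q_def algebra_simps)
  have "e \<ge> 0" using close[OF t] by simp
  have F_diff: "((\<lambda>u. F u - G t) has_integral (integral {p..q} F - (q - p) * G t)) {p..q}"
    using has_integral_diff[OF integrable_integral[OF integrable_floor_K[OF G, of p q]]
        has_integral_const_real[of "G t" p q]] pq
    by (simp add: F_def)
  have "norm (F u - G t) \<le> e" if "u \<in> {p..q} - {p, q}" for u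
    using that floor_K_between[OF t s(1), of u] close[OF floor_K_in_K]
    by (auto simp: F_def p_def q_def)
  then have "\<bar>integral {p..q} F - (q - p) * G t\<bar> \<le> e * (q - p)"
    using has_integral_bound_real[OF \<open>e \<ge> 0\<close> _ F_diff, of "{p, q}"] pq by simp
  then show ?thesis
    unfolding F_def[symmetric] increment by (auto simp: p_def q_def abs_mult)
qed

text \<open>The base point a - 1 keeps the integral additive across a, so the difference quotients
  at t = a can also be taken with points of T below a.\<close>
lemma has_delta_derivative_integral_floor_K:
  fixes G :: "real \<Rightarrow> real"
  assumes G: "continuous_on K G" and t: "t \<in> K"
  shows "has_delta_derivative T (\<lambda>\<tau>. C + integral {a-1..\<tau>} (\<lambda>u. G (floor_K u))) (G t) t"
  unfolding has_delta_derivative_def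
proof (intro conjI allI impI)
  show "t \<in> T" using t by auto
  fix e :: real assume "e > 0"
  then obtain \<delta> where "\<delta> > 0" and \<delta>: "\<forall>r\<in>K. dist r t < \<delta> \<longrightarrow> dist (G r) (G t) < e"
    using G t unfolding continuous_on_iff by blast
  have "\<bar>C + integral {a-1..sigma T t} (\<lambda>u. G (floor_K u)) - (C + integral {a-1..s} (\<lambda>u. G (floor_K u)))
      - G t * (sigma T t - s)\<bar> \<le> e * \<bar>sigma T t - s\<bar>" if "s \<in> T" "\<bar>s - t\<bar> < min \<delta> 1" for s
  proof -
    have "a - 1 \<le> s" using that t by auto
    moreover have "\<bar>G r - G t\<bar> \<le> e" if "r \<in> K" "\<bar>r - t\<bar> \<le> \<bar>s - t\<bar>" for r
    proof -
      have "dist r t < \<delta>" using that \<open>\<bar>s - t\<bar> < min \<delta> 1\<close> by (simp add: dist_real_def)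
      then show ?thesis using \<delta> \<open>r \<in> K\<close> by (fastforce simp: dist_real_def)
    qed
    ultimately show ?thesis using integral_floor_K_increment[OF G t \<open>s \<in> T\<close>] by simp
  qed
  then show "\<exists>\<delta>>0. \<forall>s\<in>T. \<bar>s - t\<bar> < \<delta> \<longrightarrow>
      \<bar>C + integral {a-1..sigma T t} (\<lambda>u. G (floor_K u)) - (C + integral {a-1..s} (\<lambda>u. G (floor_K u)))
        - G t * (sigma T t - s)\<bar> \<le> e * \<bar>sigma T t - s\<bar>"
    using \<open>\<delta> > 0\<close> by (intro exI[of _ "min \<delta> 1"]) auto
qed

lemma integral_floor_K_split:
  fixes G :: "real \<Rightarrow> real"
  assumes "continuous_on K G" "t \<in> K"
  shows "integral {a-1..t} (\<lambda>u. G (floor_K u)) = G a + integral {a..t} (\<lambda>u. G (floor_K u))"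
proof -
  have "integral {a-1..a} (\<lambda>u. G (floor_K u)) = integral {a-1..a} (\<lambda>u. G a)"
    by (rule integral_cong) (simp add: floor_K_def)
  moreover have "a \<le> t" using assms(2) by simp
  ultimately show ?thesis
    using Henstock_Kurzweil_Integration.integral_combine[where a="a-1" and c=a and b=t
        and f="\<lambda>u. G (floor_K u)"] integrable_floor_K[OF assms(1)]
    by simp
qed

end

section \<open>Induction over a time scale and a Gronwall inequality\<close>

lemma exp_growth_step:
  fixes D \<epsilon> h x u :: real
  assumes "D > 0" "\<epsilon> \<ge> 0" "h \<ge> 0" "x \<le> 2*\<epsilon>/D * (exp (D*u) - 1)"
  shows "x + h * (D*x + 2*\<epsilon>) \<le> 2*\<epsilon>/D * (exp (D*(u + h)) - 1)"
proof -
  define c where "c = 2*\<epsilon>/D"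
  have "c \<ge> 0" "c * D = 2*\<epsilon>" using assms(1,2) by (auto simp: c_def)
  have "x + h * (D*x + 2*\<epsilon>) = x * (1 + h*D) + h * (c*D)"
    using \<open>c * D = 2*\<epsilon>\<close> by (simp add: algebra_simps)
  also have "\<dots> \<le> c * (exp (D*u) - 1) * (1 + h*D) + h * (c*D)"
    using assms by (intro add_right_mono mult_right_mono) (auto simp: c_def)
  also have "\<dots> = c * (exp (D*u) * (1 + D*h)) - c"
    by (simp add: algebra_simps)
  also have "\<dots> \<le> c * (exp (D*u) * exp (D*h)) - c"
    using \<open>c \<ge> 0\<close> exp_ge_add_one_self[of "D*h"] by (intro diff_right_mono mult_left_mono) auto
  finally show ?thesis by (simp add: c_def distrib_left exp_add algebra_simps)
qed

context time_scale_interval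
begin

lemma time_scale_induct_step:
  assumes S: "\<forall>s\<in>K. s \<le> t \<longrightarrow> s \<in> S" and t: "t \<in> K" "t < b"
    and right_scattered: "t < sigma T t \<Longrightarrow> sigma T t \<in> S"
    and right_dense: "sigma T t = t \<Longrightarrow> \<exists>\<delta>>0. \<forall>s\<in>K. t < s \<and> s < t + \<delta> \<longrightarrow> s \<in> S"
  shows "\<exists>t'\<in>K. t < t' \<and> (\<forall>s\<in>K. s \<le> t' \<longrightarrow> s \<in> S)"
proof (cases "t < sigma T t")
  case True
  have "s \<in> S" if "s \<in> K" "s \<le> sigma T t" for s
  proof (cases "s \<le> t")
    case False
    then have "s = sigma T t" using that sigma_le[of s T t] by auto
    then show ?thesis using right_scattered True by simp
  qed (use S that in auto)
  then show ?thesis using True sigma_in_K[OF t] by blast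
next
  case False
  then have "sigma T t = t" using le_sigma[of t T] by linarith
  then obtain \<delta> where "\<delta> > 0" and \<delta>: "\<forall>s\<in>K. t < s \<and> s < t + \<delta> \<longrightarrow> s \<in> S"
    using right_dense by blast
  obtain r where r: "r \<in> T" "t < r" "r < t + min \<delta> (b - t)"
    using right_dense_imp_points_above[OF \<open>sigma T t = t\<close> b_in_T t(2), of "min \<delta> (b - t)"]
      \<open>\<delta> > 0\<close> t(2) by auto
  have "r \<in> K" using r t by auto
  moreover have "s \<in> S" if "s \<in> K" "s \<le> r" for s
    using that S \<delta> r by (cases "s \<le> t") auto
  ultimately show ?thesis using r by blast
qed

lemma time_scale_induct:
  assumes S: "S \<subseteq> K" "closed S" "a \<in> S"
    and right_scattered: "\<And>t. t \<in> S \<Longrightarrow> t < b \<Longrightarrow> t < sigma T t \<Longrightarrow> sigma T t \<in> S"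
    and right_dense: "\<And>t. t \<in> S \<Longrightarrow> t < b \<Longrightarrow> sigma T t = t \<Longrightarrow>
                        \<exists>\<delta>>0. \<forall>s\<in>K. t < s \<and> s < t + \<delta> \<longrightarrow> s \<in> S"
  shows "S = K"
proof -
  define A where "A = {t\<in>K. \<forall>s\<in>K. s \<le> t \<longrightarrow> s \<in> S}"
  have "a \<in> A" using S a_in_K by (auto simp: A_def)
  have bdd: "bdd_above A" by (rule bdd_aboveI[of _ b]) (auto simp: A_def)
  define c where "c = Sup A"
  have "c \<in> closure A" unfolding c_def using \<open>a \<in> A\<close> bdd by (intro closure_contains_Sup) auto
  moreover have "A \<subseteq> S" by (auto simp: A_def)
  ultimately have "c \<in> S" using closure_minimal[of A S] S(2) by auto
  have "s \<in> S" if "s \<in> K" "s \<le> c" for s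
  proof (cases "s = c")
    case False
    then have "s < Sup A" using that by (simp add: c_def)
    then obtain t where "t \<in> A" "s < t" using less_cSup_iff[of A s] \<open>a \<in> A\<close> bdd by auto
    then show ?thesis using that by (auto simp: A_def)
  qed (use \<open>c \<in> S\<close> in simp)
  then have "c \<in> A" using \<open>c \<in> S\<close> S(1) by (auto simp: A_def)
  have "c = b"
  proof (rule ccontr)
    assume "c \<noteq> b"
    then have "c < b" using \<open>c \<in> A\<close> by (auto simp: A_def)
    then obtain t' where "t' \<in> A" "c < t'"
      using time_scale_induct_step[of c S] \<open>c \<in> A\<close> \<open>c \<in> S\<close> right_scattered right_dense
      by (auto simp: A_def)
    then show False using cSup_upper[OF _ bdd] by (force simp: c_def)
  qed
  then show "S = K" using S(1) \<open>c \<in> A\<close> by (auto simp: A_def)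
qed

lemma delta_gronwall:
  assumes "D > 0" "\<epsilon> > 0"
    and der: "\<And>t. t \<in> K \<Longrightarrow> has_delta_derivative T z (\<zeta> t) t"
    and growth: "\<And>t. t \<in> K \<Longrightarrow> \<bar>\<zeta> t\<bar> \<le> D * \<bar>z t\<bar> + \<epsilon>"
    and "z a = 0" "t \<in> K"
  shows "\<bar>z t\<bar> \<le> 2*\<epsilon>/D * (exp (D*(t - a)) - 1)"
proof -
  define \<Phi> where "\<Phi> t = 2*\<epsilon>/D * (exp (D*(t - a)) - 1)" for t
  define S where "S = {t \<in> K. \<bar>z t\<bar> \<le> \<Phi> t}"
  have step: "\<bar>z t\<bar> + h * (D * \<bar>z t\<bar> + 2*\<epsilon>) \<le> \<Phi> (t + h)" if "t \<in> S" "h \<ge> 0" for t h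
    using exp_growth_step[OF \<open>D > 0\<close> _ \<open>h \<ge> 0\<close>, of \<epsilon> "\<bar>z t\<bar>" "t - a"] that \<open>\<epsilon> > 0\<close>
    by (simp add: S_def \<Phi>_def algebra_simps)
  have "continuous_on K z" using der by (rule has_delta_derivative_imp_continuous_on)
  then have "closed S" unfolding S_def \<Phi>_def
    by (intro continuous_on_closed_Collect_le closed_K continuous_intros)
  have "S = K"
  proof (rule time_scale_induct[OF _ \<open>closed S\<close>])
    show "S \<subseteq> K" "a \<in> S" using a_in_K \<open>z a = 0\<close> by (auto simp: S_def \<Phi>_def)
  next
    fix t assume "t \<in> S" "t < b" "t < sigma T t"
    then have "t \<in> K" by (simp add: S_def)
    define h where "h = mu T t"
    have "h \<ge> 0" using le_sigma[of t T] by (simp add: h_def mu_def)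
    have "z (sigma T t) = z t + h * \<zeta> t"
      using has_delta_derivative_sigma[OF der[OF \<open>t \<in> K\<close>]] by (simp add: h_def)
    then have "\<bar>z (sigma T t)\<bar> \<le> \<bar>z t\<bar> + h * \<bar>\<zeta> t\<bar>"
      using abs_triangle_ineq[of "z t" "h * \<zeta> t"] \<open>h \<ge> 0\<close> by (simp add: abs_mult)
    also have "\<dots> \<le> \<bar>z t\<bar> + h * (D * \<bar>z t\<bar> + 2*\<epsilon>)"
      using growth[OF \<open>t \<in> K\<close>] \<open>h \<ge> 0\<close> \<open>\<epsilon> > 0\<close> by (intro add_left_mono mult_left_mono) auto
    also have "\<dots> \<le> \<Phi> (sigma T t)"
      using step[OF \<open>t \<in> S\<close> \<open>h \<ge> 0\<close>] by (simp add: h_def mu_def)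
    finally show "sigma T t \<in> S" using sigma_in_K \<open>t \<in> K\<close> \<open>t < b\<close> by (simp add: S_def)
  next
    fix t assume "t \<in> S" "t < b" "sigma T t = t"
    then have "t \<in> K" by (simp add: S_def)
    obtain \<delta> where "\<delta> > 0" and \<delta>: "\<forall>s\<in>T. \<bar>s - t\<bar> < \<delta> \<longrightarrow>
        \<bar>z (sigma T t) - z s - \<zeta> t * (sigma T t - s)\<bar> \<le> \<epsilon> * \<bar>sigma T t - s\<bar>"
      using der[OF \<open>t \<in> K\<close>] \<open>\<epsilon> > 0\<close> unfolding has_delta_derivative_def by blast
    have "s \<in> S" if "s \<in> K" "t < s" "s < t + \<delta>" for s
    proof -
      define r where "r = z t - z s - \<zeta> t * (t - s)"
      have "\<bar>r\<bar> \<le> \<epsilon> * (s - t)" using \<delta> that \<open>sigma T t = t\<close> by (auto simp: r_def)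
      moreover have "z s = z t + (s - t) * \<zeta> t - r" by (simp add: r_def algebra_simps)
      moreover have "\<bar>(s - t) * \<zeta> t\<bar> = (s - t) * \<bar>\<zeta> t\<bar>" using that by (simp add: abs_mult)
      ultimately have "\<bar>z s\<bar> \<le> \<bar>z t\<bar> + (s - t) * (\<bar>\<zeta> t\<bar> + \<epsilon>)"
        by (simp add: algebra_simps)
      also have "\<dots> \<le> \<bar>z t\<bar> + (s - t) * (D * \<bar>z t\<bar> + 2*\<epsilon>)"
        using growth[OF \<open>t \<in> K\<close>] that by (intro add_left_mono mult_left_mono) auto
      also have "\<dots> \<le> \<Phi> s" using step[OF \<open>t \<in> S\<close>, of "s - t"] that by simp
      finally show ?thesis using that by (simp add: S_def)
    qed
    then show "\<exists>\<delta>>0. \<forall>s\<in>K. t < s \<and> s < t + \<delta> \<longrightarrow> s \<in> S" using \<open>\<delta> > 0\<close> by blast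
  qed
  then have "t \<in> S" using \<open>t \<in> K\<close> by simp
  then show ?thesis by (simp add: S_def \<Phi>_def)
qed

end

section \<open>Existence of solutions and Hyers--Ulam stability\<close>

lemma has_integral_exp_weight:
  fixes c a x :: real
  assumes "a \<le> x"
  shows "((\<lambda>u. c * exp (2*c*(u - a))) has_integral (exp (2*c*(x - a)) - 1) / 2) {a..x}"
proof -
  have "((\<lambda>u. c * exp (2*c*(u - a))) has_integral
      exp (2*c*(x - a)) / 2 - exp (2*c*(a - a)) / 2) {a..x}"
  proof (rule fundamental_theorem_of_calculus[OF assms])
    fix u assume "u \<in> {a..x}"
    show "((\<lambda>u. exp (2*c*(u - a)) / 2) has_vector_derivative c * exp (2*c*(u - a))) (at u within {a..x})"
      unfolding has_real_derivative_iff_has_vector_derivative[symmetric]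
      by (auto intro!: derivative_eq_intros simp: algebra_simps)
  qed
  then show ?thesis by (simp add: diff_divide_distrib)
qed

locale linear_delta_equation = time_scale_interval +
  fixes d f :: "real \<Rightarrow> real"
  assumes continuous_d: "continuous_on K d" and continuous_f: "continuous_on K f"
begin

definition d_bound :: real where
  "d_bound = (SUP r\<in>K. \<bar>d r\<bar>) + 1"

lemma abs_d_le_SUP:
  assumes "r \<in> K" shows "\<bar>d r\<bar> \<le> (SUP r\<in>K. \<bar>d r\<bar>)"
proof -
  have "compact ((\<lambda>r. \<bar>d r\<bar>) ` K)"
    using continuous_on_rabs[OF continuous_d] compact_K by (rule compact_continuous_image)
  then have "bdd_above ((\<lambda>r. \<bar>d r\<bar>) ` K)" by (simp add: bounded_imp_bdd_above compact_imp_bounded)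
  then show ?thesis using assms by (rule cSUP_upper2) simp
qed

lemma abs_d_le_d_bound: assumes "r \<in> K" shows "\<bar>d r\<bar> \<le> d_bound"
  using abs_d_le_SUP[OF assms] by (simp add: d_bound_def)

lemma d_bound_pos: "d_bound > 0"
  using abs_d_le_SUP[OF a_in_K] abs_ge_zero[of "d a"] by (simp add: d_bound_def)

text \<open>The delta initial value problem with x(a) = x0 is equivalent to the fixed point
  equation v = volterra x0 v on K.\<close>
definition volterra :: "real \<Rightarrow> (real \<Rightarrow> real) \<Rightarrow> real \<Rightarrow> real" where
  "volterra x0 v t = x0 + integral {a..t} (\<lambda>u. d (floor_K u) * v (floor_K u) + f (floor_K u))"

lemma integrable_volterra_integrand:
  assumes "continuous_on K v"
  shows "(\<lambda>u. d (floor_K u) * v (floor_K u) + f (floor_K u)) integrable_on {\<alpha>..\<beta>}"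
proof -
  have "continuous_on K (\<lambda>r. d r * v r + f r)"
    using continuous_d continuous_f assms by (intro continuous_on_add continuous_on_mult)
  then show ?thesis by (rule integrable_floor_K)
qed

lemma continuous_on_volterra:
  assumes "continuous_on K v" shows "continuous_on {a..b} (volterra x0 v)"
  unfolding volterra_def
  using indefinite_integral_continuous_1[OF integrable_volterra_integrand[OF assms]]
  by (rule continuous_on_add[OF continuous_on_const])

definition weight :: "real \<Rightarrow> real" where
  "weight t = exp (2 * d_bound * (t - a))"

lemma weight_pos: "weight t > 0"
  by (simp add: weight_def)

text \<open>Bielecki's estimate: for the sup norm of v / weight, the Volterra operator is a
  contraction with constant 1/2.\<close>
lemma volterra_weighted_lipschitz:
  assumes v: "continuous_on K v" and w: "continuous_on K w" and "a \<le> t"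
    and close: "\<And>r. r \<in> K \<Longrightarrow> \<bar>v r - w r\<bar> \<le> \<delta> * weight r"
  shows "\<bar>volterra x0 v t - volterra x0 w t\<bar> \<le> \<delta> / 2 * weight t"
proof -
  define M where "M = d_bound"
  have "M > 0" using d_bound_pos by (simp add: M_def)
  have "\<delta> \<ge> 0" using close[OF a_in_K] by (simp add: weight_def)
  define F where "F v = (\<lambda>u. d (floor_K u) * v (floor_K u) + f (floor_K u))" for v :: "real \<Rightarrow> real"
  have int: "F v integrable_on {a..t}" "F w integrable_on {a..t}"
    using integrable_volterra_integrand[OF v] integrable_volterra_integrand[OF w]
    by (simp_all add: F_def)
  have "volterra x0 v t - volterra x0 w t = integral {a..t} (F v) - integral {a..t} (F w)"
    by (simp add: volterra_def F_def)
  also have "\<dots> = integral {a..t} (\<lambda>u. F v u - F w u)"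
    by (rule integral_diff[OF int, symmetric])
  finally have diff: "volterra x0 v t - volterra x0 w t = integral {a..t} (\<lambda>u. F v u - F w u)" .
  have "norm (F v u - F w u) \<le> \<delta> * (M * exp (2*M*(u - a)))" if "u \<in> {a..t}" for u
  proof -
    have "floor_K u \<in> K" "floor_K u \<le> u" using floor_K_in_K floor_K_le[of u] that by auto
    moreover have "exp (2*M*(floor_K u - a)) \<le> exp (2*M*(u - a))"
      using \<open>floor_K u \<le> u\<close> \<open>M > 0\<close> by simp
    ultimately have "\<bar>v (floor_K u) - w (floor_K u)\<bar> \<le> \<delta> * exp (2*M*(u - a))"
      using close[of "floor_K u"] mult_left_mono[of _ _ \<delta>] \<open>\<delta> \<ge> 0\<close> unfolding M_def weight_def
      by (meson order_trans)
    moreover have "\<bar>d (floor_K u)\<bar> \<le> M" using abs_d_le_d_bound \<open>floor_K u \<in> K\<close> by (simp add: M_def)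
    ultimately have "\<bar>d (floor_K u)\<bar> * \<bar>v (floor_K u) - w (floor_K u)\<bar> \<le> M * (\<delta> * exp (2*M*(u - a)))"
      by (intro mult_mono) auto
    moreover have "F v u - F w u = d (floor_K u) * (v (floor_K u) - w (floor_K u))"
      by (simp add: F_def algebra_simps)
    ultimately show ?thesis by (simp add: abs_mult ac_simps)
  qed
  moreover have weight: "((\<lambda>u. \<delta> * (M * exp (2*M*(u - a)))) has_integral
      \<delta> * ((exp (2*M*(t - a)) - 1) / 2)) {a..t}"
    using has_integral_mult_right[OF has_integral_exp_weight[OF \<open>a \<le> t\<close>, of M]] .
  ultimately have "norm (integral {a..t} (\<lambda>u. F v u - F w u))
      \<le> integral {a..t} (\<lambda>u. \<delta> * (M * exp (2*M*(u - a))))"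
    by (intro integral_norm_bound_integral integrable_diff[OF int] has_integral_integrable[OF weight])
      auto
  also have "\<dots> = \<delta> * ((exp (2*M*(t - a)) - 1) / 2)"
    using weight by (rule integral_unique)
  also have "\<dots> \<le> \<delta> / 2 * exp (2*M*(t - a))" using \<open>\<delta> \<ge> 0\<close> by (simp add: field_simps)
  finally show ?thesis using diff by (simp add: M_def weight_def)
qed

lemma volterra_weighted_contraction:
  assumes p: "continuous_on K p" and q: "continuous_on K q" and "a \<le> t"
    and close: "\<And>r. r \<in> K \<Longrightarrow> \<bar>p r - q r\<bar> \<le> \<delta>"
  shows "\<bar>volterra x0 (\<lambda>r. weight r * p r) t / weight t
          - volterra x0 (\<lambda>r. weight r * q r) t / weight t\<bar> \<le> \<delta> / 2"
proof -
  have "\<bar>volterra x0 (\<lambda>r. weight r * p r) t - volterra x0 (\<lambda>r. weight r * q r) t\<bar>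
      \<le> \<delta> / 2 * weight t"
  proof (rule volterra_weighted_lipschitz[OF _ _ \<open>a \<le> t\<close>])
    show "continuous_on K (\<lambda>r. weight r * p r)" "continuous_on K (\<lambda>r. weight r * q r)"
      unfolding weight_def using p q by (auto intro!: continuous_intros)
    fix r assume "r \<in> K"
    have "\<bar>weight r * p r - weight r * q r\<bar> = weight r * \<bar>p r - q r\<bar>"
      using weight_pos[of r] by (simp add: right_diff_distrib[symmetric] abs_mult)
    also have "\<dots> \<le> weight r * \<delta>"
      using close[OF \<open>r \<in> K\<close>] weight_pos[of r] by (intro mult_left_mono) auto
    finally show "\<bar>weight r * p r - weight r * q r\<bar> \<le> \<delta> * weight r" by (simp add: mult.commute)
  qed
  then show ?thesis using weight_pos[of t] by (simp add: diff_divide_distrib[symmetric] divide_le_eq)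
qed

lemma volterra_fixed_point: "\<exists>v. continuous_on K v \<and> (\<forall>t\<in>K. volterra x0 v t = v t)"
proof -
  define \<Phi> where "\<Phi> q t = volterra x0 (\<lambda>r. weight r * q r) t / weight t" for q :: "real \<Rightarrow> real" and t
  have \<Phi>_cont: "continuous_on {a..b} (\<Phi> (apply_bcontfun q))" for q
  proof -
    have "continuous_on K (\<lambda>r. weight r * apply_bcontfun q r)"
      unfolding weight_def by (auto intro!: continuous_intros)
    then show ?thesis unfolding \<Phi>_def using continuous_on_volterra weight_pos
      by (intro continuous_on_divide) (auto simp: weight_def intro!: continuous_intros)
  qed
  define \<Psi> where "\<Psi> q = Bcontfun (\<lambda>t. \<Phi> (apply_bcontfun q) (clamp a b t))" for q :: "real \<Rightarrow>\<^sub>C real"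
  have \<Psi>_apply: "apply_bcontfun (\<Psi> q) t = \<Phi> q (clamp a b t)" for q t
  proof -
    have "bounded (\<Phi> q ` cbox a b)"
      using \<Phi>_cont by (simp add: compact_imp_bounded compact_continuous_image)
    then have "(\<lambda>t. \<Phi> q (clamp a b t)) \<in> bcontfun"
      using clamp_bounded[of "\<Phi> q" a b] clamp_continuous_on[of a b "\<Phi> q"] \<Phi>_cont
      by (simp add: bcontfun_def)
    then show ?thesis by (simp add: \<Psi>_def Bcontfun_inverse)
  qed
  have "dist (\<Psi> p) (\<Psi> q) \<le> 1/2 * dist p q" for p q
  proof (rule dist_bound)
    fix t
    have "a \<le> clamp a b t" using clamp_in_interval[of a b t] a_less_b by simp
    then show "dist (\<Psi> p t) (\<Psi> q t) \<le> 1/2 * dist p q"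
      using volterra_weighted_contraction[of p q "clamp a b t" "dist p q" x0] dist_bounded[of p _ q]
      by (simp add: \<Psi>_apply \<Phi>_def dist_real_def)
  qed
  then obtain q where "\<Psi> q = q" using banach_fix_type[of "1/2" \<Psi>] by auto
  define v where "v = (\<lambda>r. weight r * q r)"
  have "continuous_on K v" unfolding v_def weight_def by (auto intro!: continuous_intros)
  moreover have "volterra x0 v t = v t" if "t \<in> K" for t
  proof -
    have "q t = volterra x0 v t / weight t"
      using that \<Psi>_apply[of q t] \<open>\<Psi> q = q\<close> by (simp add: \<Phi>_def v_def)
    then show ?thesis using weight_pos[of t] by (simp add: v_def field_simps)
  qed
  ultimately show ?thesis by blast
qed

lemma solution_exists: "\<exists>y. y a = x0 \<and> (\<forall>t\<in>K. has_delta_derivative T y (d t * y t + f t) t)"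
proof -
  obtain v where v: "continuous_on K v" "\<And>t. t \<in> K \<Longrightarrow> volterra x0 v t = v t"
    using volterra_fixed_point by blast
  define \<psi> where "\<psi> r = d r * v r + f r" for r
  have \<psi>: "continuous_on K \<psi>"
    unfolding \<psi>_def by (intro continuous_intros continuous_d continuous_f v)
  define y where "y = (\<lambda>\<tau>. (x0 - \<psi> a) + integral {a-1..\<tau>} (\<lambda>u. \<psi> (floor_K u)))"
  have y_eq_v: "y t = v t" if "t \<in> K" for t
    using integral_floor_K_split[OF \<psi> that] v(2)[OF that]
    by (simp add: y_def volterra_def \<psi>_def)
  have "y a = x0" using y_eq_v[OF a_in_K] v(2)[OF a_in_K] by (simp add: volterra_def)
  moreover have "has_delta_derivative T y (d t * y t + f t) t" if "t \<in> K" for t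
    using has_delta_derivative_integral_floor_K[OF \<psi> that] y_eq_v[OF that]
    by (simp add: y_def \<psi>_def)
  ultimately show ?thesis by blast
qed

lemma hyers_ulam_estimate:
  assumes "\<epsilon> > 0"
    and g: "\<And>t. t \<in> K \<Longrightarrow> has_delta_derivative T g (g' t) t"
    and defect: "\<And>t. t \<in> K \<Longrightarrow> \<bar>g' t - d t * g t - f t\<bar> \<le> \<epsilon>"
    and y: "\<And>t. t \<in> K \<Longrightarrow> has_delta_derivative T y (d t * y t + f t) t"
    and "y a = g a" "t \<in> K"
  shows "\<bar>g t - y t\<bar> \<le> 2 * exp (d_bound * (b - a)) / d_bound * \<epsilon>"
proof -
  have "\<bar>g t - y t\<bar> \<le> 2*\<epsilon>/d_bound * (exp (d_bound*(t - a)) - 1)"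
  proof (rule delta_gronwall[OF d_bound_pos \<open>\<epsilon> > 0\<close>, where z="\<lambda>x. g x - y x"
        and \<zeta>="\<lambda>s. g' s - (d s * y s + f s)"])
    show "has_delta_derivative T (\<lambda>x. g x - y x) (g' s - (d s * y s + f s)) s" if "s \<in> K" for s
      using has_delta_derivative_diff[OF g[OF that] y[OF that]] .
    show "\<bar>g' s - (d s * y s + f s)\<bar> \<le> d_bound * \<bar>g s - y s\<bar> + \<epsilon>" if "s \<in> K" for s
    proof -
      have "\<bar>d s * (g s - y s)\<bar> \<le> d_bound * \<bar>g s - y s\<bar>"
        unfolding abs_mult using abs_d_le_d_bound[OF that] by (intro mult_right_mono) auto
      moreover have "g' s - (d s * y s + f s) = (g' s - d s * g s - f s) + d s * (g s - y s)"
        by (simp add: algebra_simps)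
      ultimately show ?thesis using defect[OF that] by linarith
    qed
  qed (use \<open>y a = g a\<close> \<open>t \<in> K\<close> in auto)
  also have "\<dots> \<le> 2*\<epsilon>/d_bound * exp (d_bound*(b - a))"
  proof (rule mult_left_mono)
    have "d_bound * (t - a) \<le> d_bound * (b - a)"
      using \<open>t \<in> K\<close> d_bound_pos by (intro mult_left_mono) auto
    then have "exp (d_bound * (t - a)) \<le> exp (d_bound * (b - a))" by simp
    then show "exp (d_bound * (t - a)) - 1 \<le> exp (d_bound * (b - a))" by linarith
  qed (use d_bound_pos \<open>\<epsilon> > 0\<close> in simp)
  finally show ?thesis by (simp add: field_simps)
qed

end

theorem mainTheorem2:
  fixes T :: "real set" and a b :: real and d f :: "real \<Rightarrow> real"
  assumes "time_scale T" and "a \<in> T" and "b \<in> T" and "a < b"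
    and "continuous_on ({a..b} \<inter> T) d" and "continuous_on ({a..b} \<inter> T) f"
    and "\<forall>t\<in>{a..b} \<inter> T. 1 + mu T t * d t \<noteq> 0"
    and "bdd_above ((\<lambda>t. \<bar>texp T a b d t a\<bar> *
           delta_integral T (\<lambda>s. \<bar>texp T a b d a (sigma T s)\<bar>) a t) ` ({a..b} \<inter> T))"
  shows "\<exists>L>0. \<forall>\<epsilon>>0. \<forall>g g'.
     ((\<forall>t\<in>{a..b} \<inter> T. has_delta_derivative T g (g' t) t) \<and>
      rd_continuous_on T ({a..b} \<inter> T) g' \<and>
      (\<forall>t\<in>{a..b} \<inter> T. \<bar>g' t - d t * g t - f t\<bar> \<le> \<epsilon>))
     \<longrightarrow> (\<exists>w w'. (\<forall>t\<in>{a..b} \<inter> T. has_delta_derivative T w (w' t) t) \<and>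
              rd_continuous_on T ({a..b} \<inter> T) w' \<and>
              (\<forall>t\<in>{a..b} \<inter> T. w' t - d t * w t - f t = 0) \<and>
              (\<forall>t\<in>{a..b} \<inter> T. \<bar>g t - w t\<bar> \<le> L * \<epsilon>))"
proof -
  interpret linear_delta_equation T a b d f
    using assms(1-6) by unfold_locales (auto simp: time_scale_def)
  define L where "L = 2 * exp (d_bound * (b - a)) / d_bound"
  show ?thesis
  proof (intro exI[of _ L] conjI allI impI)
    show "L > 0" using d_bound_pos by (simp add: L_def)
    fix \<epsilon> :: real and g g' :: "real \<Rightarrow> real"
    assume "\<epsilon> > 0" and "(\<forall>t\<in>K. has_delta_derivative T g (g' t) t) \<and> rd_continuous_on T K g' \<and>
      (\<forall>t\<in>K. \<bar>g' t - d t * g t - f t\<bar> \<le> \<epsilon>)"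
    then have g: "\<And>t. t \<in> K \<Longrightarrow> has_delta_derivative T g (g' t) t"
      and defect: "\<And>t. t \<in> K \<Longrightarrow> \<bar>g' t - d t * g t - f t\<bar> \<le> \<epsilon>" by auto
    obtain y where "y a = g a" and y: "\<And>t. t \<in> K \<Longrightarrow> has_delta_derivative T y (d t * y t + f t) t"
      using solution_exists by blast
    have "continuous_on K y" using y by (rule has_delta_derivative_imp_continuous_on)
    then have "rd_continuous_on T K (\<lambda>t. d t * y t + f t)"
      by (intro continuous_on_imp_rd_continuous_on continuous_on_add continuous_on_mult
          continuous_d continuous_f)
    moreover have "\<bar>g t - y t\<bar> \<le> L * \<epsilon>" if "t \<in> K" for t
      using hyers_ulam_estimate[OF \<open>\<epsilon> > 0\<close> g defect y \<open>y a = g a\<close> that] by (simp add: L_def)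
    ultimately show "\<exists>w w'. (\<forall>t\<in>K. has_delta_derivative T w (w' t) t) \<and> rd_continuous_on T K w' \<and>
        (\<forall>t\<in>K. w' t - d t * w t - f t = 0) \<and> (\<forall>t\<in>K. \<bar>g t - w t\<bar> \<le> L * \<epsilon>)"
      using y by (intro exI[of _ y] exI[of _ "\<lambda>t. d t * y t + f t"]) auto
  qed
qed

end
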